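(* Let $A$ be a compatible real alternative $^*$-algebra. Then: (1) the norm function $n$ takes values in the nucleus of $A$; (2) for all $x,y\in A$, $(x,x^c,y)=0$. As a consequence, the $^*$-subalgebra generated by any two elements $x,y\in A$ is associative.
   Context: A real alternative $^*$-algebra is a real vector space $A$ with a bilinear product and a unit $1$ (with $\mathbb{R}$ identified with $\mathbb{R}1$) such that the associator $(x,y,z)=(xy)z-x(yz)$ is an alternating function, equipped with a $^*$-involution $x\mapsto x^c$, i.e. a real linear map with $(x^c)^c=x$, $(xy)^c=y^cx^c$ and $r^c=r$ for $r\in\mathbb{R}$. The trace is $t(x)=x+x^c$ and the norm is $n(x)=xx^c$. The nucleus of $A$ is $\{r\in A:(r,x,y)=0\ \forall x,y\in A\}$. $A$ is called compatible if $t$ takes values in the nucleus of $A$. *)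

theory Defs
  imports "HOL-Analysis.Linear_Algebra"
begin

text \<open>A real alternative star-algebra: a real vector space 'a with a bilinear
product mul, a unit e (with e \<noteq> 0, so that the reals embed as r \<mapsto> r e),
an alternating associator, and a star-involution cj.\<close>

definition associator :: "('a \<Rightarrow> 'a \<Rightarrow> 'a) \<Rightarrow> 'a \<Rightarrow> 'a \<Rightarrow> 'a \<Rightarrow> 'a::real_vector" where
  "associator mul x y z = mul (mul x y) z - mul x (mul y z)"

definition alt_star_algebra ::
  "('a::real_vector \<Rightarrow> 'a \<Rightarrow> 'a) \<Rightarrow> 'a \<Rightarrow> ('a \<Rightarrow> 'a) \<Rightarrow> bool" where
  "alt_star_algebra mul e cj \<longleftrightarrow>
     bilinear mul \<and> e \<noteq> 0 \<and>
     (\<forall>x. mul e x = x \<and> mul x e = x) \<and>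
     (\<forall>x y. associator mul x x y = 0 \<and> associator mul x y x = 0 \<and> associator mul y x x = 0) \<and>
     linear cj \<and>
     (\<forall>x. cj (cj x) = x) \<and>
     (\<forall>x y. cj (mul x y) = mul (cj y) (cj x)) \<and>
     (\<forall>r::real. cj (r *\<^sub>R e) = r *\<^sub>R e)"

definition trace_of :: "('a \<Rightarrow> 'a) \<Rightarrow> 'a \<Rightarrow> 'a::real_vector" where
  "trace_of cj x = x + cj x"

definition norm_of :: "('a \<Rightarrow> 'a \<Rightarrow> 'a) \<Rightarrow> ('a \<Rightarrow> 'a) \<Rightarrow> 'a \<Rightarrow> 'a::real_vector" where
  "norm_of mul cj x = mul x (cj x)"

definition nucleus :: "('a \<Rightarrow> 'a \<Rightarrow> 'a) \<Rightarrow> 'a::real_vector set" where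
  "nucleus mul = {r. \<forall>x y. associator mul r x y = 0}"

definition compatible :: "('a::real_vector \<Rightarrow> 'a \<Rightarrow> 'a) \<Rightarrow> ('a \<Rightarrow> 'a) \<Rightarrow> bool" where
  "compatible mul cj \<longleftrightarrow> (\<forall>x. trace_of cj x \<in> nucleus mul)"

inductive_set star_subalg_gen ::
  "('a::real_vector \<Rightarrow> 'a \<Rightarrow> 'a) \<Rightarrow> 'a \<Rightarrow> ('a \<Rightarrow> 'a) \<Rightarrow> 'a set \<Rightarrow> 'a set"
  for mul e cj S where
  gen: "x \<in> S \<Longrightarrow> x \<in> star_subalg_gen mul e cj S"
| unit: "e \<in> star_subalg_gen mul e cj S"
| add: "x \<in> star_subalg_gen mul e cj S \<Longrightarrow> y \<in> star_subalg_gen mul e cj S \<Longrightarrow> x + y \<in> star_subalg_gen mul e cj S"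
| scale: "x \<in> star_subalg_gen mul e cj S \<Longrightarrow> (r::real) *\<^sub>R x \<in> star_subalg_gen mul e cj S"
| mult: "x \<in> star_subalg_gen mul e cj S \<Longrightarrow> y \<in> star_subalg_gen mul e cj S \<Longrightarrow> mul x y \<in> star_subalg_gen mul e cj S"
| conj: "x \<in> star_subalg_gen mul e cj S \<Longrightarrow> cj x \<in> star_subalg_gen mul e cj S"

end

theory Submission
  imports Defs
begin

text \<open>Every self-adjoint element s is half its trace, so compatibility puts all self-adjoint
elements, in particular the norms, into the nucleus; and (x, x^c, y) = (x, t(x), y) - (x, x, y) = 0.
For the associativity statement let Z be the star-subalgebra generated by the self-adjoint
elements. It lies in the nucleus and contains every commutator za - az with z in Z. For the
skew elements u = x - x^c, v = y - y^c and w = uv, the Z-module Z + Zu + Zv + Zw contains x and y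
and is closed under products and the involution, because the multiplication table of 1, u, v, w
has coefficients in Z. By multilinearity over the nucleus, associators on this module reduce to
associators of u, v, w, and (u, v, w) = 0 follows from the Teichmueller identity.\<close>

locale alt_star =
  fixes mul :: "'a::real_vector \<Rightarrow> 'a \<Rightarrow> 'a" (infixl "\<odot>" 70) and e :: 'a and cj :: "'a \<Rightarrow> 'a"
  assumes alt_star_algebra: "alt_star_algebra mul e cj"
begin

abbreviation As where "As \<equiv> associator mul"

lemma bilinear_mul: "bilinear mul"
  and linear_cj: "linear cj"
  using alt_star_algebra by (simp_all add: alt_star_algebra_def)

lemma mul_simps [simp]:
  "(a + b) \<odot> c = a \<odot> c + b \<odot> c" "c \<odot> (a + b) = c \<odot> a + c \<odot> b"
  "(a - b) \<odot> c = a \<odot> c - b \<odot> c" "c \<odot> (a - b) = c \<odot> a - c \<odot> b"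
  "(- a) \<odot> c = - (a \<odot> c)" "c \<odot> (- a) = - (c \<odot> a)"
  "(r *\<^sub>R a) \<odot> c = r *\<^sub>R (a \<odot> c)" "c \<odot> (r *\<^sub>R a) = r *\<^sub>R (c \<odot> a)"
  "0 \<odot> c = 0" "c \<odot> 0 = 0"
  using bilinear_mul
  by (simp_all add: bilinear_ladd bilinear_radd bilinear_lsub bilinear_rsub
      bilinear_lneg bilinear_rneg bilinear_lmul bilinear_rmul bilinear_lzero bilinear_rzero)

lemma cj_simps [simp]:
  "cj (a + b) = cj a + cj b" "cj (a - b) = cj a - cj b" "cj (- a) = - cj a"
  "cj (r *\<^sub>R a) = r *\<^sub>R cj a" "cj 0 = 0"
  using linear_cj by (simp_all add: linear_add linear_diff linear_neg linear_cmul linear_0)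

lemma cj_cj [simp]: "cj (cj x) = x"
  and cj_mul: "cj (a \<odot> b) = cj b \<odot> cj a"
  and mul_unit_left [simp]: "e \<odot> x = x"
  and mul_unit_right [simp]: "x \<odot> e = x"
  and associator_left_alternative [simp]: "As x x y = 0"
  and associator_flexible [simp]: "As x y x = 0"
  and associator_right_alternative [simp]: "As y x x = 0"
  using alt_star_algebra by (simp_all add: alt_star_algebra_def)

lemma cj_unit [simp]: "cj e = e"
  using alt_star_algebra unfolding alt_star_algebra_def by (metis scaleR_one)

lemma associator_eq: "As x y z = (x \<odot> y) \<odot> z - x \<odot> (y \<odot> z)"
  by (simp add: associator_def)

lemma mul_left_alternative: "(x \<odot> x) \<odot> y = x \<odot> (x \<odot> y)"
  and mul_flexible: "(x \<odot> y) \<odot> x = x \<odot> (y \<odot> x)"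
  and mul_right_alternative: "(y \<odot> x) \<odot> x = y \<odot> (x \<odot> x)"
  using associator_left_alternative[of x y] associator_flexible[of x y]
    associator_right_alternative[of y x]
  unfolding associator_eq by simp_all

lemma associator_linear:
  "As (a + b) y z = As a y z + As b y z" "As x (a + b) z = As x a z + As x b z"
  "As x y (a + b) = As x y a + As x y b"
  "As (r *\<^sub>R a) y z = r *\<^sub>R As a y z" "As x (r *\<^sub>R a) z = r *\<^sub>R As x a z"
  "As x y (r *\<^sub>R a) = r *\<^sub>R As x y a"
  "As (a - b) y z = As a y z - As b y z" "As x (a - b) z = As x a z - As x b z"
  "As x y (a - b) = As x y a - As x y b"
  by (simp_all add: associator_eq algebra_simps)

lemma associator_swap12: "As y x z = - As x y z"
proof -
  have "0 = As (x + y) (x + y) z" by simp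
  also have "\<dots> = As x y z + As y x z" by (simp only: associator_linear) simp
  finally show ?thesis by (metis add.commute add_eq_0_iff2)
qed

lemma associator_swap23: "As x z y = - As x y z"
proof -
  have "0 = As x (y + z) (y + z)" by simp
  also have "\<dots> = As x y z + As x z y" by (simp only: associator_linear) simp
  finally show ?thesis by (metis add.commute add_eq_0_iff2)
qed

lemma associator_cycle: "As y z x = As x y z"
  using associator_swap12[of y x z] associator_swap23[of y x z] by simp

lemma cj_associator: "cj (As a b c) = - As (cj c) (cj b) (cj a)"
  by (simp add: associator_eq cj_mul)

lemma half_trace_plus_half_skew: "x = (1/2::real) *\<^sub>R (x + cj x) + (1/2::real) *\<^sub>R (x - cj x)"
  by (simp add: algebra_simps scaleR_add_left[symmetric])

lemma teichmuller_identity: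
  "As (a \<odot> b) c d - As a (b \<odot> c) d + As a b (c \<odot> d) = a \<odot> As b c d + As a b c \<odot> d"
  by (simp add: associator_eq algebra_simps)

abbreviation N where "N \<equiv> nucleus mul"

lemma associator_nucleus_left: "n \<in> N \<Longrightarrow> As n x y = 0"
  by (simp add: nucleus_def)

lemma associator_nucleus_middle: "n \<in> N \<Longrightarrow> As x n y = 0"
  using associator_cycle[of n y x] associator_nucleus_left by simp

lemma associator_nucleus_right: "n \<in> N \<Longrightarrow> As x y n = 0"
  using associator_cycle[of x y n] associator_nucleus_left by simp

lemma mul_assoc_nucleus_left: "n \<in> N \<Longrightarrow> (n \<odot> a) \<odot> b = n \<odot> (a \<odot> b)"
  using associator_nucleus_left[of n a b] by (simp add: associator_eq)

lemma mul_assoc_nucleus_middle: "n \<in> N \<Longrightarrow> (a \<odot> n) \<odot> b = a \<odot> (n \<odot> b)"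
  using associator_nucleus_middle[of n a b] by (simp add: associator_eq)

lemma mul_assoc_nucleus_right: "n \<in> N \<Longrightarrow> (a \<odot> b) \<odot> n = a \<odot> (b \<odot> n)"
  using associator_nucleus_right[of n a b] by (simp add: associator_eq)

lemma nucleus_add: "a \<in> N \<Longrightarrow> b \<in> N \<Longrightarrow> a + b \<in> N"
  by (simp add: nucleus_def associator_linear)

lemma nucleus_scaleR: "a \<in> N \<Longrightarrow> r *\<^sub>R a \<in> N"
  by (simp add: nucleus_def associator_linear)

lemma unit_in_nucleus: "e \<in> N"
  by (simp add: nucleus_def associator_eq)

lemma nucleus_conj:
  assumes "n \<in> N"
  shows "cj n \<in> N"
proof -
  have "As (cj n) x y = - cj (As (cj y) (cj x) n)" for x y
    by (simp add: cj_associator)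
  then show ?thesis by (simp add: nucleus_def associator_nucleus_right[OF assms])
qed

lemma nucleus_mul:
  assumes a: "a \<in> N" and b: "b \<in> N"
  shows "a \<odot> b \<in> N"
proof -
  have "((a \<odot> b) \<odot> x) \<odot> y = (a \<odot> b) \<odot> (x \<odot> y)" for x y
  proof -
    have "((a \<odot> b) \<odot> x) \<odot> y = a \<odot> ((b \<odot> x) \<odot> y)"
      by (simp add: mul_assoc_nucleus_left[OF a])
    also have "\<dots> = a \<odot> (b \<odot> (x \<odot> y))"
      by (simp add: mul_assoc_nucleus_left[OF b])
    also have "\<dots> = (a \<odot> b) \<odot> (x \<odot> y)"
      by (simp add: mul_assoc_nucleus_left[OF a])
    finally show ?thesis .
  qed
  then show ?thesis by (simp add: nucleus_def associator_eq)
qed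

lemma associator_nucleus_mul_left: "n \<in> N \<Longrightarrow> As (n \<odot> a) b c = n \<odot> As a b c"
  by (simp add: associator_eq mul_assoc_nucleus_left)

end

locale compatible_alt_star = alt_star +
  assumes compatible: "compatible mul cj"
begin

lemma trace_in_nucleus: "x + cj x \<in> N"
  using compatible by (simp add: compatible_def trace_of_def)

lemma self_adjoint_in_nucleus:
  assumes "cj s = s"
  shows "s \<in> N"
proof -
  have "s = (1/2::real) *\<^sub>R (s + cj s)"
    using assms by (simp add: scaleR_2)
  then show ?thesis using nucleus_scaleR[OF trace_in_nucleus] by metis
qed

lemma norm_in_nucleus: "norm_of mul cj x \<in> N"
  unfolding norm_of_def by (rule self_adjoint_in_nucleus) (simp add: cj_mul)

lemma associator_cj_middle: "As x (cj x) y = 0"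
proof -
  have "As x (cj x) y = As x (x + cj x) y - As x x y"
    by (simp add: associator_linear)
  then show ?thesis by (simp add: associator_nucleus_middle[OF trace_in_nucleus])
qed

abbreviation sym_alg where "sym_alg \<equiv> star_subalg_gen mul e cj {s. cj s = s}"

lemma sym_alg_nucleus: "z \<in> sym_alg \<Longrightarrow> z \<in> N"
proof (induction rule: star_subalg_gen.induct)
  case (gen x)
  then show ?case by (simp add: self_adjoint_in_nucleus)
next
  case unit
  show ?case by (rule unit_in_nucleus)
next
  case (add x y)
  from add.IH show ?case by (rule nucleus_add)
next
  case (scale x r)
  from scale.IH show ?case by (rule nucleus_scaleR)
next
  case (mult x y)
  from mult.IH show ?case by (rule nucleus_mul)
next
  case (conj x)
  from conj.IH show ?case by (rule nucleus_conj)
qed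

lemma self_adjoint_in_sym_alg: "cj s = s \<Longrightarrow> s \<in> sym_alg"
  by (rule star_subalg_gen.gen) simp

lemma trace_in_sym_alg: "x + cj x \<in> sym_alg"
  by (rule self_adjoint_in_sym_alg) (simp add: add.commute)

lemma sym_alg_uminus: "a \<in> sym_alg \<Longrightarrow> - a \<in> sym_alg"
  using star_subalg_gen.scale[where r = "-1"] by simp

lemma sym_alg_diff: "a \<in> sym_alg \<Longrightarrow> b \<in> sym_alg \<Longrightarrow> a - b \<in> sym_alg"
  unfolding diff_conv_add_uminus by (intro star_subalg_gen.add sym_alg_uminus)

lemma zero_in_sym_alg: "0 \<in> sym_alg"
  using star_subalg_gen.scale[OF star_subalg_gen.unit, of 0] by simp

lemma sym_alg_commutator: "z \<in> sym_alg \<Longrightarrow> z \<odot> a - a \<odot> z \<in> sym_alg"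
proof (induction arbitrary: a rule: star_subalg_gen.induct)
  case (gen s)
  then have s: "cj s = s" "s \<in> sym_alg" by (auto intro: self_adjoint_in_sym_alg)
  define c where "c = s \<odot> a - a \<odot> s"
  have "c - cj c = s \<odot> (a + cj a) - (a + cj a) \<odot> s"
    by (simp add: c_def cj_mul s(1) algebra_simps)
  also have "\<dots> \<in> sym_alg"
    by (intro sym_alg_diff star_subalg_gen.mult s(2) trace_in_sym_alg)
  finally have "(1/2::real) *\<^sub>R (c + cj c) + (1/2::real) *\<^sub>R (c - cj c) \<in> sym_alg"
    by (intro star_subalg_gen.add star_subalg_gen.scale trace_in_sym_alg)
  then have "c \<in> sym_alg"
    by (subst half_trace_plus_half_skew)
  then show ?case by (simp add: c_def)
next
  case unit
  show ?case using zero_in_sym_alg by simp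
next
  case (add x y)
  have "(x + y) \<odot> a - a \<odot> (x + y) = (x \<odot> a - a \<odot> x) + (y \<odot> a - a \<odot> y)" by simp
  also have "\<dots> \<in> sym_alg" using add.IH by (rule star_subalg_gen.add)
  finally show ?case .
next
  case (scale x r)
  have "(r *\<^sub>R x) \<odot> a - a \<odot> (r *\<^sub>R x) = r *\<^sub>R (x \<odot> a - a \<odot> x)" by (simp add: algebra_simps)
  also have "\<dots> \<in> sym_alg" using scale.IH by (rule star_subalg_gen.scale)
  finally show ?case .
next
  case (mult x y)
  have x: "x \<in> N" and y: "y \<in> N" using mult.hyps sym_alg_nucleus by auto
  have "(x \<odot> y) \<odot> a - a \<odot> (x \<odot> y) = x \<odot> (y \<odot> a - a \<odot> y) + (x \<odot> a - a \<odot> x) \<odot> y"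
    using mul_assoc_nucleus_left[OF x, of y a] mul_assoc_nucleus_middle[OF x, of a y]
      mul_assoc_nucleus_right[OF y, of a x] mul_assoc_nucleus_left[OF x, of a y] by simp
  also have "\<dots> \<in> sym_alg"
    using mult by (intro star_subalg_gen.add star_subalg_gen.mult)
  finally show ?case .
next
  case (conj x)
  have "cj x \<odot> a - a \<odot> cj x = - cj (x \<odot> cj a - cj a \<odot> x)" by (simp add: cj_mul)
  also have "\<dots> \<in> sym_alg" using conj.IH by (intro sym_alg_uminus star_subalg_gen.conj)
  finally show ?case .
qed

end

locale skew_pair = compatible_alt_star +
  fixes u v w
  assumes cj_u: "cj u = - u" and cj_v: "cj v = - v" and w_eq: "w = u \<odot> v"
begin

definition sym_span where
  "sym_span = {z0 + z1 \<odot> u + z2 \<odot> v + z3 \<odot> w | z0 z1 z2 z3.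
     z0 \<in> sym_alg \<and> z1 \<in> sym_alg \<and> z2 \<in> sym_alg \<and> z3 \<in> sym_alg}"

lemma sym_spanI:
  "z0 \<in> sym_alg \<Longrightarrow> z1 \<in> sym_alg \<Longrightarrow> z2 \<in> sym_alg \<Longrightarrow> z3 \<in> sym_alg \<Longrightarrow>
    z0 + z1 \<odot> u + z2 \<odot> v + z3 \<odot> w \<in> sym_span"
  unfolding sym_span_def by blast

lemma sym_spanE:
  assumes "p \<in> sym_span"
  obtains z0 z1 z2 z3 where "z0 \<in> sym_alg" "z1 \<in> sym_alg" "z2 \<in> sym_alg" "z3 \<in> sym_alg"
    and "p = z0 + z1 \<odot> u + z2 \<odot> v + z3 \<odot> w"
  using assms unfolding sym_span_def by blast

lemma sym_span_add:
  assumes "p \<in> sym_span" "q \<in> sym_span"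
  shows "p + q \<in> sym_span"
proof -
  obtain a0 a1 a2 a3 where a: "a0 \<in> sym_alg" "a1 \<in> sym_alg" "a2 \<in> sym_alg" "a3 \<in> sym_alg"
    and p: "p = a0 + a1 \<odot> u + a2 \<odot> v + a3 \<odot> w" using assms(1) by (rule sym_spanE)
  obtain b0 b1 b2 b3 where b: "b0 \<in> sym_alg" "b1 \<in> sym_alg" "b2 \<in> sym_alg" "b3 \<in> sym_alg"
    and q: "q = b0 + b1 \<odot> u + b2 \<odot> v + b3 \<odot> w" using assms(2) by (rule sym_spanE)
  have "p + q = (a0 + b0) + (a1 + b1) \<odot> u + (a2 + b2) \<odot> v + (a3 + b3) \<odot> w"
    by (simp add: p q algebra_simps)
  also have "\<dots> \<in> sym_span"
    using a b by (intro sym_spanI star_subalg_gen.add)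
  finally show ?thesis .
qed

lemma sym_span_scaleR:
  assumes "p \<in> sym_span"
  shows "r *\<^sub>R p \<in> sym_span"
proof -
  obtain a0 a1 a2 a3 where a: "a0 \<in> sym_alg" "a1 \<in> sym_alg" "a2 \<in> sym_alg" "a3 \<in> sym_alg"
    and p: "p = a0 + a1 \<odot> u + a2 \<odot> v + a3 \<odot> w" using assms by (rule sym_spanE)
  have "r *\<^sub>R p = r *\<^sub>R a0 + (r *\<^sub>R a1) \<odot> u + (r *\<^sub>R a2) \<odot> v + (r *\<^sub>R a3) \<odot> w"
    by (simp add: p algebra_simps)
  also have "\<dots> \<in> sym_span"
    using a by (intro sym_spanI star_subalg_gen.scale)
  finally show ?thesis .
qed

lemma sym_span_diff: "p \<in> sym_span \<Longrightarrow> q \<in> sym_span \<Longrightarrow> p - q \<in> sym_span"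
  using sym_span_add[of p "(-1) *\<^sub>R q"] sym_span_scaleR[of q "-1"] by simp

abbreviation frame where "frame \<equiv> {e, u, v, w}"

lemma sym_mul_frame_in_span:
  assumes "z \<in> sym_alg" "m \<in> frame"
  shows "z \<odot> m \<in> sym_span"
  using assms zero_in_sym_alg
    sym_spanI[of z 0 0 0] sym_spanI[of 0 z 0 0] sym_spanI[of 0 0 z 0] sym_spanI[of 0 0 0 z]
  by auto

lemma sym_alg_in_span: "z \<in> sym_alg \<Longrightarrow> z \<in> sym_span"
  using sym_mul_frame_in_span[of z e] by simp

lemma frame_in_span: "m \<in> frame \<Longrightarrow> m \<in> sym_span"
  using sym_mul_frame_in_span[OF star_subalg_gen.unit] by simp

lemma sym_mul_span:
  assumes z: "z \<in> sym_alg" and p: "p \<in> sym_span"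
  shows "z \<odot> p \<in> sym_span"
proof -
  obtain a0 a1 a2 a3 where a: "a0 \<in> sym_alg" "a1 \<in> sym_alg" "a2 \<in> sym_alg" "a3 \<in> sym_alg"
    and p: "p = a0 + a1 \<odot> u + a2 \<odot> v + a3 \<odot> w" using p by (rule sym_spanE)
  have "z \<odot> p = z \<odot> a0 + (z \<odot> a1) \<odot> u + (z \<odot> a2) \<odot> v + (z \<odot> a3) \<odot> w"
    by (simp add: p mul_assoc_nucleus_left[OF sym_alg_nucleus[OF z]])
  also have "\<dots> \<in> sym_span"
    using z a by (intro sym_spanI star_subalg_gen.mult)
  finally show ?thesis .
qed

lemma frame_mul_sym_in_span:
  assumes "m \<in> frame" "z \<in> sym_alg"
  shows "m \<odot> z \<in> sym_span"
proof -
  have "m \<odot> z = z \<odot> m - (z \<odot> m - m \<odot> z)" by simp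
  also have "\<dots> \<in> sym_span"
    using assms by (intro sym_span_diff sym_mul_frame_in_span sym_alg_in_span sym_alg_commutator)
  finally show ?thesis .
qed

lemma cj_w: "cj w = v \<odot> u"
  by (simp add: w_eq cj_mul cj_u cj_v)

lemma frame_mul_frame_in_span:
  assumes "m \<in> frame" "m' \<in> frame"
  shows "m \<odot> m' \<in> sym_span"
proof -
  \<comment> \<open>the self-adjoint coefficients of the multiplication table\<close>
  define \<alpha> \<beta> \<gamma> \<delta> where "\<alpha> = u \<odot> u" and "\<beta> = u \<odot> v + v \<odot> u"
    and "\<gamma> = v \<odot> v" and "\<delta> = w \<odot> cj w"
  have sym: "\<alpha> \<in> sym_alg" "\<beta> \<in> sym_alg" "\<gamma> \<in> sym_alg" "\<delta> \<in> sym_alg"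
    unfolding \<alpha>_def \<beta>_def \<gamma>_def \<delta>_def
    by (simp_all add: self_adjoint_in_sym_alg cj_mul cj_u cj_v add.commute)
  have span: "e \<in> sym_span" "u \<in> sym_span" "v \<in> sym_span" "w \<in> sym_span"
    by (simp_all add: frame_in_span)
  have vu: "v \<odot> u = \<beta> - w" by (simp add: \<beta>_def w_eq)
  have uu: "u \<odot> u \<in> sym_span" using sym_alg_in_span sym by (simp add: \<alpha>_def)
  have vv: "v \<odot> v \<in> sym_span" using sym_alg_in_span sym by (simp add: \<gamma>_def)
  have uv: "u \<odot> v \<in> sym_span" using span by (simp add: w_eq)
  have vu': "v \<odot> u \<in> sym_span"
    unfolding vu using sym by (intro sym_span_diff sym_alg_in_span span)
  have "u \<odot> w = \<alpha> \<odot> v"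
    by (simp add: mul_left_alternative w_eq \<alpha>_def)
  then have uw: "u \<odot> w \<in> sym_span" using sym by (simp add: sym_mul_frame_in_span)
  have "w \<odot> v = u \<odot> \<gamma>"
    by (simp add: mul_right_alternative w_eq \<gamma>_def)
  then have wv: "w \<odot> v \<in> sym_span" using sym by (simp add: frame_mul_sym_in_span)
  have "v \<odot> w = (v \<odot> u) \<odot> v" by (simp add: w_eq mul_flexible)
  also have "\<dots> = \<beta> \<odot> v - w \<odot> v" by (simp add: vu)
  finally have vw: "v \<odot> w \<in> sym_span"
    using sym wv by (simp add: sym_span_diff sym_mul_frame_in_span)
  have "w \<odot> u = u \<odot> (v \<odot> u)" by (simp add: w_eq mul_flexible)
  also have "\<dots> = u \<odot> \<beta> - u \<odot> w" by (simp add: vu)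
  finally have wu: "w \<odot> u \<in> sym_span"
    using sym uw by (simp add: sym_span_diff frame_mul_sym_in_span)
  have "w \<odot> w = w \<odot> \<beta> - \<delta>"
    by (simp add: \<delta>_def cj_w vu)
  then have ww: "w \<odot> w \<in> sym_span"
    using sym by (simp add: sym_span_diff frame_mul_sym_in_span sym_alg_in_span)
  show ?thesis
    using assms span uu vv uv vu' uw wv vw wu ww by auto
qed

lemma sym_frame_mul_sym_frame_in_span:
  assumes z: "z \<in> sym_alg" "z' \<in> sym_alg" and m: "m \<in> frame" "m' \<in> frame"
  shows "(z \<odot> m) \<odot> (z' \<odot> m') \<in> sym_span"
proof -
  have z'N: "z' \<in> N" using z(2) by (rule sym_alg_nucleus)
  define c where "c = z' \<odot> m - m \<odot> z'"
  have "(z \<odot> m) \<odot> (z' \<odot> m') = z \<odot> ((m \<odot> z') \<odot> m')"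
    by (simp add: mul_assoc_nucleus_left[OF sym_alg_nucleus[OF z(1)]] mul_assoc_nucleus_middle[OF z'N])
  also have "(m \<odot> z') \<odot> m' = z' \<odot> (m \<odot> m') - c \<odot> m'"
    by (simp add: c_def mul_assoc_nucleus_left[OF z'N])
  also have "z \<odot> (z' \<odot> (m \<odot> m') - c \<odot> m') \<in> sym_span"
  proof -
    have "c \<in> sym_alg" unfolding c_def using z(2) by (rule sym_alg_commutator)
    then show ?thesis
      using z m by (simp add: sym_mul_span sym_span_diff frame_mul_frame_in_span
          sym_mul_frame_in_span)
  qed
  finally show ?thesis .
qed

lemma sym_span_sym_frame_expansion:
  assumes "p \<in> sym_span"
  obtains z0 z1 z2 z3 where "z0 \<in> sym_alg" "z1 \<in> sym_alg" "z2 \<in> sym_alg" "z3 \<in> sym_alg"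
    and "p = z0 \<odot> e + z1 \<odot> u + z2 \<odot> v + z3 \<odot> w"
proof -
  obtain z0 z1 z2 z3 where "z0 \<in> sym_alg" "z1 \<in> sym_alg" "z2 \<in> sym_alg" "z3 \<in> sym_alg"
    and "p = z0 + z1 \<odot> u + z2 \<odot> v + z3 \<odot> w"
    using assms by (rule sym_spanE)
  then show thesis using that[of z0 z1 z2 z3] by simp
qed

lemma sym_frame_mul_span_in_span:
  assumes "z \<in> sym_alg" "m \<in> frame" "q \<in> sym_span"
  shows "(z \<odot> m) \<odot> q \<in> sym_span"
proof -
  obtain b0 b1 b2 b3 where b: "b0 \<in> sym_alg" "b1 \<in> sym_alg" "b2 \<in> sym_alg" "b3 \<in> sym_alg"
    and q: "q = b0 \<odot> e + b1 \<odot> u + b2 \<odot> v + b3 \<odot> w"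
    using assms(3) by (rule sym_span_sym_frame_expansion)
  show ?thesis
    unfolding q mul_simps(2)
    by (intro sym_span_add sym_frame_mul_sym_frame_in_span assms(1,2) b) simp_all
qed

lemma sym_span_mul:
  assumes "p \<in> sym_span" "q \<in> sym_span"
  shows "p \<odot> q \<in> sym_span"
proof -
  obtain a0 a1 a2 a3 where a: "a0 \<in> sym_alg" "a1 \<in> sym_alg" "a2 \<in> sym_alg" "a3 \<in> sym_alg"
    and p: "p = a0 \<odot> e + a1 \<odot> u + a2 \<odot> v + a3 \<odot> w"
    using assms(1) by (rule sym_span_sym_frame_expansion)
  show ?thesis
    unfolding p mul_simps(1)
    by (intro sym_span_add sym_frame_mul_span_in_span a assms(2)) simp_all
qed

lemma sym_span_cj:
  assumes "p \<in> sym_span"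
  shows "cj p \<in> sym_span"
proof -
  obtain a0 a1 a2 a3 where a: "a0 \<in> sym_alg" "a1 \<in> sym_alg" "a2 \<in> sym_alg" "a3 \<in> sym_alg"
    and p: "p = a0 + a1 \<odot> u + a2 \<odot> v + a3 \<odot> w"
    using assms by (rule sym_spanE)
  have cj_a: "cj a0 \<in> sym_alg" "cj a1 \<in> sym_alg" "cj a2 \<in> sym_alg" "cj a3 \<in> sym_alg"
    using a by (simp_all add: star_subalg_gen.conj)
  have "cj p = cj a0 - u \<odot> cj a1 - v \<odot> cj a2 + (v \<odot> u) \<odot> cj a3"
    by (simp add: p cj_mul cj_u cj_v cj_w)
  also have "\<dots> \<in> sym_span"
  proof (intro sym_span_add sym_span_diff)
    show "cj a0 \<in> sym_span" using cj_a(1) by (rule sym_alg_in_span)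
    show "u \<odot> cj a1 \<in> sym_span" "v \<odot> cj a2 \<in> sym_span"
      using cj_a(2,3) by (simp_all add: frame_mul_sym_in_span)
    show "(v \<odot> u) \<odot> cj a3 \<in> sym_span"
      using frame_mul_frame_in_span[of v u] sym_alg_in_span[OF cj_a(4)] by (simp add: sym_span_mul)
  qed
  finally show ?thesis .
qed

lemma associator_u_v_w: "As u v w = 0"
proof -
  have \<beta>: "u \<odot> v + v \<odot> u \<in> N"
    by (rule self_adjoint_in_nucleus) (simp add: cj_mul cj_u cj_v add.commute)
  have "As (u \<odot> v) u v = As u v w"
    using associator_cycle[of v w u] associator_cycle[of u v w] by (simp add: w_eq)
  moreover have "As u (v \<odot> u) v = As u v w"
  proof -
    have "As u (v \<odot> u) v = As u (u \<odot> v + v \<odot> u) v - As u w v"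
      by (simp add: w_eq associator_linear)
    then show ?thesis
      using associator_nucleus_middle[OF \<beta>] associator_swap23[of u w v] by simp
  qed
  moreover have "As u v (u \<odot> v) = As u v w" by (simp add: w_eq)
  moreover have "As (u \<odot> v) u v - As u (v \<odot> u) v + As u v (u \<odot> v) = 0"
    using teichmuller_identity[of u v u v] by simp
  ultimately show ?thesis by simp
qed

lemma associator_frame:
  assumes "m \<in> frame" "m' \<in> frame" "m'' \<in> frame"
  shows "As m m' m'' = 0"
proof -
  have "As u w v = 0" "As v u w = 0" "As v w u = 0" "As w u v = 0" "As w v u = 0"
    using associator_u_v_w associator_swap12[of u v w] associator_swap23[of u v w]
      associator_cycle[of u v w] associator_cycle[of v w u] associator_swap12[of v w u]
    by simp_all
  then show ?thesis
    using assms associator_u_v_w associator_nucleus_left[OF unit_in_nucleus]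
      associator_nucleus_middle[OF unit_in_nucleus] associator_nucleus_right[OF unit_in_nucleus]
    by auto
qed

lemma associator_span_left:
  assumes "p \<in> sym_span" and frame: "\<forall>m\<in>{u, v, w}. As m b c = 0"
  shows "As p b c = 0"
proof -
  obtain a0 a1 a2 a3 where a: "a0 \<in> sym_alg" "a1 \<in> sym_alg" "a2 \<in> sym_alg" "a3 \<in> sym_alg"
    and p: "p = a0 + a1 \<odot> u + a2 \<odot> v + a3 \<odot> w"
    using assms(1) by (rule sym_spanE)
  have "As p b c = a1 \<odot> As u b c + a2 \<odot> As v b c + a3 \<odot> As w b c"
    using a by (simp add: p associator_linear associator_nucleus_mul_left
        associator_nucleus_left sym_alg_nucleus)
  then show ?thesis using frame by simp
qed

lemma associator_sym_span:
  assumes "p \<in> sym_span" "q \<in> sym_span" "r \<in> sym_span"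
  shows "As p q r = 0"
proof -
  \<comment> \<open>move the span elements one at a time into the first slot\<close>
  have frame_frame: "As p' m' m'' = 0" if "p' \<in> sym_span" "m' \<in> frame" "m'' \<in> frame" for p' m' m''
    using that associator_frame by (blast intro: associator_span_left)
  have frame: "As p' q' m'' = 0" if "p' \<in> sym_span" "q' \<in> sym_span" "m'' \<in> frame" for p' q' m''
  proof -
    have "As q' p' m'' = 0"
      using that frame_frame associator_swap12[of _ p' m'']
      by (intro associator_span_left) auto
    then show ?thesis using associator_swap12[of p' q' m''] by simp
  qed
  have "As r p q = 0"
    using assms frame associator_cycle[where y = p and z = q, symmetric] by (intro associator_span_left) auto
  then show ?thesis using associator_cycle[of p q r] associator_cycle[of q r p] by simp
qed

end

context compatible_alt_star
begin

lemma associator_star_subalg_gen_pair: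
  assumes "a \<in> star_subalg_gen mul e cj {x, y}" "b \<in> star_subalg_gen mul e cj {x, y}"
    "c \<in> star_subalg_gen mul e cj {x, y}"
  shows "As a b c = 0"
proof -
  interpret skew_pair mul e cj "x - cj x" "y - cj y" "(x - cj x) \<odot> (y - cj y)"
    by unfold_locales simp_all
  have half_sum_in_span: "(1/2::real) *\<^sub>R (t + cj t) + (1/2::real) *\<^sub>R (t - cj t) \<in> sym_span"
    if "t - cj t \<in> frame" for t
    using that by (intro sym_span_add sym_span_scaleR sym_alg_in_span trace_in_sym_alg frame_in_span)
  have "x \<in> sym_span" "y \<in> sym_span"
    using half_sum_in_span[of x] half_sum_in_span[of y]
    by (simp_all only: half_trace_plus_half_skew[symmetric]) simp_all
  have "d \<in> sym_span" if "d \<in> star_subalg_gen mul e cj {x, y}" for d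
    using that
  proof (induction rule: star_subalg_gen.induct)
    case (gen d)
    with \<open>x \<in> sym_span\<close> \<open>y \<in> sym_span\<close> show ?case by auto
  next
    case unit
    show ?case by (rule frame_in_span) simp
  next
    case (add a b)
    from add.IH show ?case by (rule sym_span_add)
  next
    case (scale a r)
    from scale.IH show ?case by (rule sym_span_scaleR)
  next
    case (mult a b)
    from mult.IH show ?case by (rule sym_span_mul)
  next
    case (conj a)
    from conj.IH show ?case by (rule sym_span_cj)
  qed
  then show ?thesis using assms associator_sym_span by blast
qed

end

theorem theorem1p10:
  fixes mul :: "'a::real_vector \<Rightarrow> 'a \<Rightarrow> 'a" and e :: 'a and cj :: "'a \<Rightarrow> 'a"
  assumes "alt_star_algebra mul e cj"
    and "compatible mul cj"
  shows "(\<forall>x. norm_of mul cj x \<in> nucleus mul)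
    \<and> (\<forall>x y. associator mul x (cj x) y = 0)
    \<and> (\<forall>x y. \<forall>a\<in>star_subalg_gen mul e cj {x, y}. \<forall>b\<in>star_subalg_gen mul e cj {x, y}.
          \<forall>c\<in>star_subalg_gen mul e cj {x, y}. associator mul a b c = 0)"
proof -
  interpret compatible_alt_star mul e cj
    using assms by unfold_locales
  show ?thesis
    using norm_in_nucleus associator_cj_middle associator_star_subalg_gen_pair by blast
qed

end
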